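(* Let $p$ be an odd prime, and let $q$ denote the smallest prime greater than $p/2$. Write $p=p_n$, where $p_k$ denotes the $k$-th prime, and let $p_{n+1}$ be the next prime after $p$. Then the following two conditions are equivalent: (1) all the integers $\frac{p+1}{2},\frac{p+3}{2},\dots,\frac{p_{n+1}-1}{2}$ are composite; (2) the open interval $(p,\,2q)$ contains a prime.
   Context: $p_k$ denotes the $k$-th prime ($p_1=2$, $p_2=3,\dots$). Since $p/2$ is not an integer, the smallest prime $q$ greater than $p/2$ is the prime $p_{m+1}$ with $p_m<p/2<p_{m+1}$. *)

theory Defs
  imports Complex_Main "HOL-Computational_Algebra.Primes"
begin

definition next_prime :: "nat \<Rightarrow> nat" where
  "next_prime p = (LEAST r. prime r \<and> p < r)"

definition least_prime_above_half :: "nat \<Rightarrow> nat" where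
  "least_prime_above_half p = (LEAST q. prime q \<and> real p / 2 < real q)"

definition composite :: "nat \<Rightarrow> bool" where
  "composite m \<longleftrightarrow> 1 < m \<and> \<not> prime m"

end

theory Submission
  imports Defs
begin

text \<open>Both conditions say that the next prime p_{n+1} lies below 2q. For (2) this is
  immediate, since p_{n+1} is the least prime after p. For (1), the integers m with
  p < 2m < p_{n+1} are all above p/2, so one of them is prime iff q is among them,
  i.e. iff 2q < p_{n+1}. The case 2q = p_{n+1} is excluded by parity.\<close>

lemma next_prime:
  fixes p :: nat
  shows "prime (next_prime p)" and "p < next_prime p"
proof -
  obtain r where "prime r" "p < r"
    using bigger_prime by blast
  then have "prime (next_prime p) \<and> p < next_prime p"
    unfolding next_prime_def by (rule LeastI[of _ r, OF conjI])
  then show "prime (next_prime p)" and "p < next_prime p"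
    by auto
qed

lemma next_prime_le:
  fixes p r :: nat
  assumes "prime r" and "p < r"
  shows "next_prime p \<le> r"
  unfolding next_prime_def using assms by (intro Least_le) blast

lemma ex_prime_between_iff_next_prime_less:
  fixes p b :: nat
  shows "(\<exists>r. prime r \<and> p < r \<and> r < b) \<longleftrightarrow> next_prime p < b"
  using next_prime[of p] next_prime_le[of _ p] le_less_trans by blast

lemma least_prime_above_half_le:
  fixes p r :: nat
  assumes "prime r" and "p < 2 * r"
  shows "least_prime_above_half p \<le> r"
  unfolding least_prime_above_half_def using assms by (intro Least_le) auto

lemma least_prime_above_half:
  fixes p :: nat
  shows "prime (least_prime_above_half p)" and "p < 2 * least_prime_above_half p"
proof -
  obtain r :: nat where "prime r" "p < r"
    using bigger_prime by blast
  then have "prime r \<and> real p / 2 < real r"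
    by simp
  then have "prime (least_prime_above_half p) \<and> real p / 2 < real (least_prime_above_half p)"
    unfolding least_prime_above_half_def by (rule LeastI)
  then show "prime (least_prime_above_half p)" and "p < 2 * least_prime_above_half p"
    by linarith+
qed

lemma all_composite_iff_le_twice_least_prime_above_half:
  fixes p n :: nat
  assumes "2 \<le> p"
  shows "(\<forall>m. p + 1 \<le> 2 * m \<and> 2 * m \<le> n - 1 \<longrightarrow> composite m)
    \<longleftrightarrow> n \<le> 2 * least_prime_above_half p"
    (is "?all_composite \<longleftrightarrow> _")
proof
  let ?q = "least_prime_above_half p"
  assume ?all_composite
  have "\<not> composite ?q"
    using least_prime_above_half(1) unfolding composite_def by blast
  with \<open>?all_composite\<close> least_prime_above_half(2)[of p] have "\<not> 2 * ?q \<le> n - 1"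
    by auto
  then show "n \<le> 2 * ?q"
    by linarith
next
  assume n_le: "n \<le> 2 * least_prime_above_half p"
  show ?all_composite
  proof (intro allI impI)
    fix m
    assume m: "p + 1 \<le> 2 * m \<and> 2 * m \<le> n - 1"
    have "\<not> prime m"
      using least_prime_above_half_le[of m p] m n_le by fastforce
    moreover have "1 < m"
      using m assms by linarith
    ultimately show "composite m"
      unfolding composite_def by blast
  qed
qed

theorem lemma1:
  fixes p :: nat
  assumes "prime p" and "odd p"
  shows "(\<forall>m::nat. p + 1 \<le> 2 * m \<and> 2 * m \<le> next_prime p - 1 \<longrightarrow> composite m)
     \<longleftrightarrow> (\<exists>r::nat. prime r \<and> p < r \<and> r < 2 * least_prime_above_half p)"
proof -
  have "3 \<le> p"
    using assms prime_ge_2_nat[of p] by (cases "p = 2") auto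
  then have "odd (next_prime p)"
    using next_prime[of p] by (intro prime_odd_nat) auto
  then have "next_prime p \<noteq> 2 * least_prime_above_half p"
    by auto
  then have "next_prime p \<le> 2 * least_prime_above_half p
      \<longleftrightarrow> next_prime p < 2 * least_prime_above_half p"
    by auto
  with \<open>3 \<le> p\<close> show ?thesis
    using all_composite_iff_le_twice_least_prime_above_half[of p "next_prime p"]
      ex_prime_between_iff_next_prime_less[of p "2 * least_prime_above_half p"]
    by simp
qed

end
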